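(* Let $L$ be a frame. The map $\nu(F)=\bigcap_{a\in F}\mathfrak o(a)$ restricts to an order isomorphism from $(\mathsf{Ex}(L),\sqsubseteq)$ onto $(\{\mathrm{fit}(S)\mid S\in\mathcal S_b(L)\},\subseteq)$, with inverse $S\mapsto\{a\in L\mid S\subseteq\mathfrak o(a)\}$.
   Context: A frame is a complete lattice $L$ with $(\bigvee A)\wedge b=\bigvee_{a\in A}(a\wedge b)$, Heyting implication $\to$. A sublocale is a subset $S\subseteq L$ closed under all meets with $a\to s\in S$ for $a\in L,s\in S$; the sublocales form a coframe $\mathsf{Sl}(L)$ under inclusion, with meets intersections and joins $\bigvee_i S_i=\{\bigwedge A\mid A\subseteq\bigcup_i S_i\}$. $\mathfrak o(a)=\{a\to b\mid b\in L\}$ (open sublocale), $\mathfrak c(a)={\uparrow}a$ (closed sublocale). $\mathrm{fit}(S)=\bigcap\{\mathfrak o(a)\mid S\subseteq\mathfrak o(a)\}$. A smooth sublocale is a join in $\mathsf{Sl}(L)$ of sublocales of the form $\mathfrak c(x)\cap\mathfrak o(y)$; $\mathcal S_b(L)$ is the set of smooth sublocales. Filters are nonempty up-closed subsets closed under finite meets, ordered by reverse inclusion $\sqsubseteq$. $\mathsf{Ex}(L)$ is the set of filters containing every exact meet of their subsets, where $\bigwedge M$ is exact if $(\bigwedge M)\vee b=\bigwedge_{a\in M}(a\vee b)$ for all $b$. *)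

theory Defs
  imports Main
begin

definition is_frame :: "'a::complete_lattice itself \<Rightarrow> bool" where
  "is_frame _ \<longleftrightarrow> (\<forall>(A::'a set) b. inf (Sup A) b = (SUP a\<in>A. inf a b))"

definition himp :: "'a::complete_lattice \<Rightarrow> 'a \<Rightarrow> 'a" where
  "himp a b = Sup {c. inf c a \<le> b}"

definition is_sublocale :: "'a::complete_lattice set \<Rightarrow> bool" where
  "is_sublocale S \<longleftrightarrow> (\<forall>M. M \<subseteq> S \<longrightarrow> Inf M \<in> S) \<and> (\<forall>a. \<forall>s\<in>S. himp a s \<in> S)"

text \<open>Join in the coframe of sublocales of a family of sublocales.\<close>
definition sl_join :: "'a::complete_lattice set set \<Rightarrow> 'a set" where
  "sl_join \<F> = {Inf A | A. A \<subseteq> \<Union>\<F>}"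

definition open_sl :: "'a::complete_lattice \<Rightarrow> 'a set" where
  "open_sl a = {himp a b | b. True}"

definition closed_sl :: "'a::complete_lattice \<Rightarrow> 'a set" where
  "closed_sl a = {b. a \<le> b}"

definition fit :: "'a::complete_lattice set \<Rightarrow> 'a set" where
  "fit S = \<Inter>{open_sl a | a. S \<subseteq> open_sl a}"

definition smooth_sublocales :: "'a::complete_lattice set set" where
  "smooth_sublocales = {sl_join \<F> | \<F>. \<F> \<subseteq> {closed_sl x \<inter> open_sl y | x y. True}}"

definition is_filter :: "'a::complete_lattice set \<Rightarrow> bool" where
  "is_filter F \<longleftrightarrow> F \<noteq> {} \<and> (\<forall>a b. a \<in> F \<longrightarrow> a \<le> b \<longrightarrow> b \<in> F)
     \<and> (\<forall>a\<in>F. \<forall>b\<in>F. inf a b \<in> F)"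

definition exact_meet :: "'a::complete_lattice set \<Rightarrow> bool" where
  "exact_meet M \<longleftrightarrow> (\<forall>b. sup (Inf M) b = (INF a\<in>M. sup a b))"

definition exact_filters :: "'a::complete_lattice set set" where
  "exact_filters = {F. is_filter F \<and> (\<forall>M. M \<subseteq> F \<longrightarrow> exact_meet M \<longrightarrow> Inf M \<in> F)}"

definition nu :: "'a::complete_lattice set \<Rightarrow> 'a set" where
  "nu F = (\<Inter>a\<in>F. open_sl a)"

definition nu_inv :: "'a::complete_lattice set \<Rightarrow> 'a set" where
  "nu_inv S = {a. S \<subseteq> open_sl a}"

end

theory Submission imports Defs begin

text \<open>
  Everything rests on one computation in a frame: \<open>\<mathfrak>c(x) \<inter> \<mathfrak>o(y) \<subseteq> \<mathfrak>o(a)\<close> iff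
  \<open>y \<le> a \<squnion> x\<close>. Hence for a smooth sublocale \<open>S\<close>, generated by pieces \<open>\<mathfrak>c(x) \<inter> \<mathfrak>o(y)\<close>
  indexed by a set \<open>R\<close> of pairs, the filter \<open>{a | S \<subseteq> \<mathfrak>o(a)}\<close> is the set of all \<open>a\<close> with
  \<open>y \<le> a \<squnion> x\<close> for every \<open>(x, y) \<in> R\<close>; such sets are closed under exact meets because
  \<open>(\<Sqinter>M) \<squnion> x = \<Sqinter>\<^bsub>m\<in>M\<^esub> (m \<squnion> x)\<close> for an exact meet. Conversely an exact filter is cut out
  by the constraints \<open>(x, y)\<close> it satisfies. So the exact filters are exactly the sets \<open>{a | S \<subseteq> \<mathfrak>o(a)}\<close>
  with \<open>S\<close> smooth, and the theorem follows from the Galois connection between \<open>\<nu>\<close> and its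
  inverse, whose closure on sublocales is \<open>fit\<close>.
\<close>

locale frame =
  assumes inf_Sup_distrib: "inf (Sup A) (b::'a::complete_lattice) = (SUP a\<in>A. inf a b)"
begin

lemma inf_sup_distrib: "inf (x::'a) (sup y z) = sup (inf x y) (inf x z)"
  using inf_Sup_distrib[of "{y, z}" x] by (simp add: inf_commute)

lemma le_himp_iff: "(c::'a) \<le> himp a b \<longleftrightarrow> inf c a \<le> b"
proof
  assume "c \<le> himp a b"
  then have "inf c a \<le> inf (himp a b) a" by (rule inf_mono) simp
  also have "\<dots> = (SUP d\<in>{d. inf d a \<le> b}. inf d a)" unfolding himp_def by (rule inf_Sup_distrib)
  also have "\<dots> \<le> b" by (rule SUP_least) simp
  finally show "inf c a \<le> b" .
qed (simp add: himp_def Sup_upper)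

lemma le_himp: "(b::'a) \<le> himp a b"
  by (simp add: le_himp_iff)

lemma inf_himp_le: "inf (himp a b) (a::'a) \<le> b"
  using le_himp_iff by blast

lemma himp_inf_eq_himp_himp: "himp (inf a b) (c::'a) = himp a (himp b c)"
proof (rule order.antisym)
  have "inf (inf (himp a (himp b c)) a) b \<le> inf (himp b c) b"
    using inf_himp_le by (rule inf_mono) simp
  also have "\<dots> \<le> c" by (rule inf_himp_le)
  finally show "himp a (himp b c) \<le> himp (inf a b) c"
    by (simp add: le_himp_iff inf.assoc)
qed (simp add: le_himp_iff inf.assoc inf_himp_le)

lemma himp_mono: "(a'::'a) \<le> a \<Longrightarrow> b \<le> b' \<Longrightarrow> himp a b \<le> himp a' b'"
  by (meson inf_mono le_himp_iff order.trans order_refl)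

lemma himp_eq_top_iff: "himp a (b::'a) = top \<longleftrightarrow> a \<le> b"
  by (metis le_himp_iff inf_top_left top.extremum_unique)

lemma himp_himp_same: "himp a (himp a (b::'a)) = himp a b"
  using himp_inf_eq_himp_himp[of a a b] by simp

lemma open_sl_eq: "open_sl a = {s::'a. himp a s \<le> s}"
  unfolding open_sl_def
  using himp_himp_same le_himp by (auto intro: order.antisym) (metis order.antisym)

lemma open_sl_top: "open_sl (top::'a) = UNIV"
  unfolding open_sl_eq using inf_himp_le[of top] by simp

lemma open_sl_mono: "(a::'a) \<le> b \<Longrightarrow> open_sl a \<subseteq> open_sl b"
  unfolding open_sl_eq by (auto intro: order.trans himp_mono)

lemma open_sl_Int: "open_sl a \<inter> open_sl b \<subseteq> open_sl (inf a (b::'a))"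
proof
  fix s assume "s \<in> open_sl a \<inter> open_sl b"
  then have "himp a s \<le> s" "himp b s \<le> s" by (auto simp: open_sl_eq)
  then have "himp a (himp b s) \<le> s" by (meson himp_mono order_refl order_trans)
  then show "s \<in> open_sl (inf a b)" by (simp add: open_sl_eq himp_inf_eq_himp_himp)
qed

lemma Inf_mem_open_sl: "M \<subseteq> open_sl a \<Longrightarrow> Inf M \<in> open_sl (a::'a)"
  unfolding open_sl_eq
proof (intro CollectI Inf_greatest)
  fix s assume "M \<subseteq> {s. himp a s \<le> s}" "s \<in> M"
  then show "himp a (Inf M) \<le> s" using himp_mono[OF order_refl Inf_lower] order_trans by blast
qed

lemma closed_Int_open_subset_open_iff:
  "closed_sl x \<inter> open_sl y \<subseteq> open_sl a \<longleftrightarrow> (y::'a) \<le> sup a x"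
proof
  assume sub: "closed_sl x \<inter> open_sl y \<subseteq> open_sl a"
  let ?s = "himp y (sup a x)"
  have "?s \<in> closed_sl x \<inter> open_sl y"
    using le_himp[of "sup a x" y] himp_himp_same[of y]
    by (auto simp: closed_sl_def open_sl_eq intro: order.trans)
  with sub have "himp a ?s \<le> ?s" by (auto simp: open_sl_eq)
  moreover have "a \<le> ?s" using le_himp[of "sup a x" y] by (meson order_trans sup_ge1)
  ultimately have "?s = top" using himp_eq_top_iff[of a ?s] le_himp[of ?s a] by simp
  then show "y \<le> sup a x" using himp_eq_top_iff by metis
next
  assume y: "y \<le> sup a x"
  show "closed_sl x \<inter> open_sl y \<subseteq> open_sl a"
  proof
    fix s assume "s \<in> closed_sl x \<inter> open_sl y"
    then have xs: "x \<le> s" and ys: "himp y s \<le> s" unfolding open_sl_eq closed_sl_def by auto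
    let ?h = "himp a s"
    have "inf ?h y \<le> inf ?h (sup a x)" using y by (simp add: inf.coboundedI2)
    also have "\<dots> = sup (inf ?h a) (inf ?h x)" by (rule inf_sup_distrib)
    also have "\<dots> \<le> s" using xs le_himp_iff[of ?h a s] by (simp add: le_infI2)
    finally have "?h \<le> himp y s" by (simp add: le_himp_iff)
    with ys show "s \<in> open_sl a" unfolding open_sl_eq by simp
  qed
qed

lemma sl_join_subset_open_iff: "sl_join \<F> \<subseteq> open_sl (a::'a) \<longleftrightarrow> (\<forall>X\<in>\<F>. X \<subseteq> open_sl a)"
proof
  assume sub: "sl_join \<F> \<subseteq> open_sl a"
  have "s \<in> open_sl a" if "X \<in> \<F>" "s \<in> X" for X s
  proof -
    have "Inf {s} \<in> sl_join \<F>" using that unfolding sl_join_def by blast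
    with sub show ?thesis by auto
  qed
  then show "\<forall>X\<in>\<F>. X \<subseteq> open_sl a" by blast
qed (auto simp: sl_join_def intro!: Inf_mem_open_sl)

lemma is_filter_nu_inv: "is_filter (nu_inv (S::'a set))"
  unfolding is_filter_def nu_inv_def
  using open_sl_top open_sl_mono open_sl_Int by blast

end

definition constrained :: "('a::complete_lattice \<times> 'a) set \<Rightarrow> 'a set" where
  "constrained R = {a. \<forall>(x, y)\<in>R. y \<le> sup a x}"

definition closed_open_join :: "('a::complete_lattice \<times> 'a) set \<Rightarrow> 'a set" where
  "closed_open_join R = sl_join ((\<lambda>(x, y). closed_sl x \<inter> open_sl y) ` R)"

lemma smooth_sublocales_eq_range: "smooth_sublocales = range closed_open_join"
proof -
  have "\<F> \<subseteq> {closed_sl x \<inter> open_sl y | x y. True} \<longleftrightarrow>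
      (\<exists>R. \<F> = (\<lambda>(x, y). closed_sl x \<inter> open_sl y) ` R)" for \<F> :: "'a set set"
  proof
    assume "\<F> \<subseteq> {closed_sl x \<inter> open_sl y | x y. True}"
    then have "\<F> = (\<lambda>(x, y). closed_sl x \<inter> open_sl y) ` {(x, y). closed_sl x \<inter> open_sl y \<in> \<F>}"
      by fastforce
    then show "\<exists>R. \<F> = (\<lambda>(x, y). closed_sl x \<inter> open_sl y) ` R" ..
  qed auto
  then show ?thesis unfolding smooth_sublocales_def closed_open_join_def by auto
qed

lemma Inf_mem_constrained:
  assumes "M \<subseteq> constrained R" and "exact_meet M"
  shows "Inf M \<in> constrained R"
proof -
  have "y \<le> sup (Inf M) x" if "(x, y) \<in> R" for x y
  proof -
    have "y \<le> (INF m\<in>M. sup m x)" using assms(1) that by (auto simp: constrained_def intro!: INF_greatest)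
    also have "\<dots> = sup (Inf M) x" using assms(2) by (simp add: exact_meet_def)
    finally show ?thesis .
  qed
  then show ?thesis by (auto simp: constrained_def)
qed

text \<open>
  An element satisfying every constraint of an exact filter \<open>F\<close> is the exact meet of the
  members of \<open>F\<close> above it.
\<close>

lemma constrained_exact_filter:
  assumes F: "F \<in> exact_filters"
  shows "constrained {(x, y). \<forall>f\<in>F. y \<le> sup f x} = F"
proof
  show "F \<subseteq> constrained {(x, y). \<forall>f\<in>F. y \<le> sup f x}" by (auto simp: constrained_def)
  show "constrained {(x, y). \<forall>f\<in>F. y \<le> sup f x} \<subseteq> F"
  proof
    fix a assume "a \<in> constrained {(x, y). \<forall>f\<in>F. y \<le> sup f x}"
    then have a: "\<And>x y. \<forall>f\<in>F. y \<le> sup f x \<Longrightarrow> y \<le> sup a x" by (auto simp: constrained_def)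
    have up: "\<And>f g. f \<in> F \<Longrightarrow> f \<le> g \<Longrightarrow> g \<in> F"
      using F unfolding exact_filters_def is_filter_def by blast
    have le: "Inf {f\<in>F. b \<le> f} \<le> b" if "a \<le> b" for b
    proof -
      have "\<forall>f\<in>F. Inf {f\<in>F. b \<le> f} \<le> sup f b" using up by (auto intro!: Inf_lower)
      then have "Inf {f\<in>F. b \<le> f} \<le> sup a b" by (rule a)
      with that show ?thesis by (simp add: sup_absorb2)
    qed
    define M where "M = {f\<in>F. a \<le> f}"
    have Inf_M: "Inf M = a" unfolding M_def using le[of a] by (auto intro!: order.antisym Inf_greatest)
    have "sup (Inf M) c = (INF f\<in>M. sup f c)" for c
    proof (rule order.antisym)
      show "sup (Inf M) c \<le> (INF f\<in>M. sup f c)"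
        unfolding Inf_M by (rule INF_greatest) (auto simp: M_def intro: le_supI1)
      have "(INF f\<in>M. sup f c) \<le> Inf {f\<in>F. sup a c \<le> f}"
        by (rule Inf_greatest) (auto simp: M_def sup_absorb1 intro!: INF_lower2)
      also have "\<dots> \<le> sup a c" by (rule le) simp
      finally show "(INF f\<in>M. sup f c) \<le> sup (Inf M) c" unfolding Inf_M .
    qed
    then have "exact_meet M" by (simp add: exact_meet_def)
    moreover have "M \<subseteq> F" unfolding M_def by auto
    ultimately have "Inf M \<in> F" using F unfolding exact_filters_def by blast
    then show "a \<in> F" using Inf_M by simp
  qed
qed

lemma fit_eq_nu_nu_inv: "fit S = nu (nu_inv S)"
  unfolding fit_def nu_def nu_inv_def by auto

lemma nu_inv_fit: "nu_inv (fit S) = nu_inv S"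
  unfolding fit_def nu_inv_def by auto

lemma fit_fit: "fit (fit S) = fit S"
  by (metis fit_eq_nu_nu_inv nu_inv_fit)

lemma nu_antimono: "F \<subseteq> G \<Longrightarrow> nu G \<subseteq> nu F"
  unfolding nu_def by auto

lemma nu_inv_antimono: "S \<subseteq> T \<Longrightarrow> nu_inv T \<subseteq> nu_inv S"
  unfolding nu_inv_def by auto

context frame
begin

lemma nu_inv_closed_open_join: "nu_inv (closed_open_join R) = constrained (R::('a \<times> 'a) set)"
  unfolding nu_inv_def closed_open_join_def constrained_def sl_join_subset_open_iff
  by (simp add: closed_Int_open_subset_open_iff split_def)

lemma exact_filters_eq_nu_inv_smooth: "exact_filters = nu_inv ` (smooth_sublocales :: 'a set set)"
proof
  show "exact_filters \<subseteq> nu_inv ` (smooth_sublocales :: 'a set set)"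
  proof
    fix F :: "'a set" assume "F \<in> exact_filters"
    then have "F = nu_inv (closed_open_join {(x, y). \<forall>f\<in>F. y \<le> sup f x})"
      by (simp add: nu_inv_closed_open_join constrained_exact_filter)
    then show "F \<in> nu_inv ` smooth_sublocales" by (simp add: smooth_sublocales_eq_range)
  qed
  show "nu_inv ` (smooth_sublocales :: 'a set set) \<subseteq> exact_filters"
    using is_filter_nu_inv Inf_mem_constrained
    by (auto simp: smooth_sublocales_eq_range exact_filters_def nu_inv_closed_open_join)
qed

end

theorem mainTheorem12:
  fixes L :: "'a::complete_lattice itself"
  assumes "is_frame L"
  shows "bij_betw (nu :: 'a set \<Rightarrow> 'a set) exact_filters {fit S | S. S \<in> smooth_sublocales}
    \<and> (\<forall>F\<in>(exact_filters :: 'a set set). \<forall>G\<in>exact_filters. (G \<subseteq> F) \<longleftrightarrow> nu F \<subseteq> nu G)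
    \<and> (\<forall>T\<in>{fit S | S. S \<in> (smooth_sublocales :: 'a set set)}. nu_inv T \<in> exact_filters \<and> nu (nu_inv T) = T)
    \<and> (\<forall>F\<in>(exact_filters :: 'a set set). nu_inv (nu F) = F)"
proof -
  interpret frame
    using assms by unfold_locales (simp add: is_frame_def)
  let ?Fits = "{fit S | S. S \<in> (smooth_sublocales :: 'a set set)}"
  have exact: "exact_filters = nu_inv ` (smooth_sublocales :: 'a set set)"
    by (rule exact_filters_eq_nu_inv_smooth)
  have left_inverse: "\<forall>F\<in>(exact_filters :: 'a set set). nu_inv (nu F) = F"
    by (auto simp: exact fit_eq_nu_nu_inv [symmetric] nu_inv_fit)
  have right_inverse: "\<forall>T\<in>?Fits. nu_inv T \<in> exact_filters \<and> nu (nu_inv T) = T"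
    by (auto simp: exact fit_eq_nu_nu_inv [symmetric] nu_inv_fit fit_fit)
  have image: "nu ` exact_filters = ?Fits"
    by (auto simp: exact fit_eq_nu_nu_inv)
  have "bij_betw (nu :: 'a set \<Rightarrow> 'a set) exact_filters ?Fits"
    unfolding bij_betw_def image by (metis left_inverse inj_on_inverseI)
  moreover have "\<forall>F\<in>(exact_filters :: 'a set set). \<forall>G\<in>exact_filters. G \<subseteq> F \<longleftrightarrow> nu F \<subseteq> nu G"
    using left_inverse by (metis nu_antimono nu_inv_antimono)
  ultimately show ?thesis using right_inverse left_inverse by blast
qed

end
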